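(* For every integer $d\ge3$, the set $\mathfrak P_d\subseteq\mathbb R^{2d-3}$ is an integral polytope (all its vertices lie in $\mathbb Z^{2d-3}$) with exactly $3^{d-2}$ vertices.
   Context: $\mathfrak P_d\subseteq\mathbb R^{2d-3}$ is the set of all $(x_1,\dots,x_{d-2},y_1,\dots,y_{d-2},z)\in\mathbb R^{2d-3}$ satisfying: $x_j-x_{j+1}\ge0$ and $y_j-y_{j+1}\ge0$ for $j\in\{1,\dots,d-3\}$; $x_j\ge0$, $y_j\ge0$ for $j\in\{1,\dots,d-2\}$; $j(z+d-1-j)+\sum_{i=0}^{j-2}x_{d-2-i}-\sum_{i=1}^{j}y_i\ge0$ for $j\in\{1,\dots,d-2\}$; and $\sum_{i=1}^{d-2}y_i-\sum_{i=1}^{d-2}x_i=z(d-1)$. A vertex of a polytope given by a system of linear inequalities is a point of it at which $2d-3$ linearly independent constraints are tight. *)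

theory Defs
  imports Complex_Main "HOL-Library.Function_Algebras"
begin

text \<open>Points of R^(2d-3) are encoded as functions p :: nat => real with p i = 0 for
  i >= 2d-3.  Coordinate layout: x_j = p (j-1) (j = 1..d-2),
  y_j = p (d-3+j) (j = 1..d-2), z = p (2d-4).\<close>

definition pdim :: "nat \<Rightarrow> nat" where "pdim d = 2*d - 3"
definition xi :: "nat \<Rightarrow> nat" where "xi j = j - 1"
definition yi :: "nat \<Rightarrow> nat \<Rightarrow> nat" where "yi d j = d - 3 + j"
definition zi :: "nat \<Rightarrow> nat" where "zi d = 2*d - 4"

definition ev :: "nat \<Rightarrow> nat \<Rightarrow> real" where "ev k = (\<lambda>i. if i = k then 1 else 0)"

definition lval :: "nat \<Rightarrow> (nat \<Rightarrow> real) \<times> real \<Rightarrow> (nat \<Rightarrow> real) \<Rightarrow> real" where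
  "lval d c p = (\<Sum>i<pdim d. fst c i * p i) + snd c"

definition ineqs :: "nat \<Rightarrow> ((nat \<Rightarrow> real) \<times> real) set" where
  "ineqs d =
     {(ev (xi j) - ev (xi (j+1)), 0) | j. 1 \<le> j \<and> j \<le> d - 3}
   \<union> {(ev (yi d j) - ev (yi d (j+1)), 0) | j. 1 \<le> j \<and> j \<le> d - 3}
   \<union> {(ev (xi j), 0) | j. 1 \<le> j \<and> j \<le> d - 2}
   \<union> {(ev (yi d j), 0) | j. 1 \<le> j \<and> j \<le> d - 2}
   \<union> {((\<lambda>i. real j * ev (zi d) i) + (\<Sum>i\<in>{0..<j-1}. ev (xi (d - 2 - i)))
          - (\<Sum>i\<in>{1..j}. ev (yi d i)),
        real j * (real d - 1 - real j)) | j. 1 \<le> j \<and> j \<le> d - 2}"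

definition eqc :: "nat \<Rightarrow> (nat \<Rightarrow> real) \<times> real" where
  "eqc d = ((\<Sum>i\<in>{1..d-2}. ev (yi d i)) - (\<Sum>i\<in>{1..d-2}. ev (xi i))
            - (\<lambda>i. (real d - 1) * ev (zi d) i), 0)"

definition Pd :: "nat \<Rightarrow> (nat \<Rightarrow> real) set" where
  "Pd d = {p. (\<forall>i\<ge>pdim d. p i = 0) \<and> (\<forall>c\<in>ineqs d. lval d c p \<ge> 0) \<and> lval d (eqc d) p = 0}"

definition lin_indep :: "nat \<Rightarrow> (nat \<Rightarrow> real) set \<Rightarrow> bool" where
  "lin_indep n V \<longleftrightarrow> finite V \<and>
     (\<forall>u. (\<forall>i<n. (\<Sum>v\<in>V. u v * v i) = 0) \<longrightarrow> (\<forall>v\<in>V. u v = 0))"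

definition tight :: "nat \<Rightarrow> (nat \<Rightarrow> real) \<Rightarrow> ((nat \<Rightarrow> real) \<times> real) set" where
  "tight d p = {c \<in> ineqs d. lval d c p = 0} \<union> {eqc d}"

definition vertices :: "nat \<Rightarrow> (nat \<Rightarrow> real) set" where
  "vertices d = {p \<in> Pd d. \<exists>V \<subseteq> fst ` tight d p. card V = pdim d \<and> lin_indep (pdim d) V}"

end

theory Submission
  imports Defs "Jordan_Normal_Form.Determinant" "HOL-Library.FuncSet"
begin

(*
  Write m = d - 2 and call a_k = x_k - x_(k+1) and b_k = y_k - y_(k+1) the gaps of a point
  (x_(m+1) = y_(m+1) = 0). Extend the slacks s_j of the inequalities
  j (z + d - 1 - j) + ... >= 0 by s_0 = 0 and s_(m+1) = 0, the latter being the equality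
  constraint. Then the second difference of s at j is c_j - 2 with c_j = a_(m+1-j) + b_j, and a
  point is determined by its gaps, so P_d is the set of nonnegative gap vectors whose slack
  function is nonnegative.

  At a vertex no direction keeps all tight constraints tight. Shifting curvature from one gap to
  the other shows that c_j is carried by only one of a_(m+1-j), b_j, and moving along a hat function
  between consecutive zeros of s shows that c_j > 0 forces s_j = 0; conversely s_j = 0 forces
  c_j >= 2 because s >= 0. So if S is the zero set of s in {1..m}, then
  between consecutive points l < r of S and {0, m + 1} the slack is (j - l) (r - j), which
  determines c. A vertex is thus given by choosing, for every j in {1..m}, whether j lies outside S
  or which gap carries c_j: 3^m choices. Each choice gives a point with integer coordinates at which
  2m + 1 independent constraints are tight.
*)

section \<open>Linear independence and kernels\<close>

lemma det_nonzero_iff_kernel_trivial: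
  fixes M :: "real mat"
  assumes M: "M \<in> carrier_mat n n"
  shows "det M \<noteq> 0 \<longleftrightarrow> (\<forall>q. (\<forall>r<n. (\<Sum>i<n. M $$ (r, i) * q i) = 0) \<longrightarrow> (\<forall>i<n. q i = 0))"
proof -
  have row: "(M *\<^sub>v vec n q) $ r = (\<Sum>i<n. M $$ (r, i) * q i)" if "r < n" for q r
    using M that by (simp add: scalar_prod_def lessThan_atLeast0 mult.commute)
  have "det M = 0 \<longleftrightarrow> (\<exists>v. v \<in> carrier_vec n \<and> v \<noteq> 0\<^sub>v n \<and> M *\<^sub>v v = 0\<^sub>v n)"
    by (rule det_0_iff_vec_prod_zero[OF M])
  also have "\<dots> \<longleftrightarrow> (\<exists>q. (\<forall>r<n. (\<Sum>i<n. M $$ (r, i) * q i) = 0) \<and> (\<exists>i<n. q i \<noteq> 0))"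
  proof
    assume "\<exists>v. v \<in> carrier_vec n \<and> v \<noteq> 0\<^sub>v n \<and> M *\<^sub>v v = 0\<^sub>v n"
    then obtain v where v: "v \<in> carrier_vec n" "v \<noteq> 0\<^sub>v n" "M *\<^sub>v v = 0\<^sub>v n" by blast
    have "v = vec n (\<lambda>i. v $ i)" using v(1) by auto
    then have "\<forall>r<n. (\<Sum>i<n. M $$ (r, i) * v $ i) = 0" using row v(3) by (metis index_zero_vec(1))
    moreover have "\<exists>i<n. v $ i \<noteq> 0" using v(1,2) by (auto simp: vec_eq_iff)
    ultimately show "\<exists>q. (\<forall>r<n. (\<Sum>i<n. M $$ (r, i) * q i) = 0) \<and> (\<exists>i<n. q i \<noteq> 0)" by blast
  next
    assume "\<exists>q. (\<forall>r<n. (\<Sum>i<n. M $$ (r, i) * q i) = 0) \<and> (\<exists>i<n. q i \<noteq> 0)"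
    then obtain q where q: "\<forall>r<n. (\<Sum>i<n. M $$ (r, i) * q i) = 0" "\<exists>i<n. q i \<noteq> 0" by blast
    have "M *\<^sub>v vec n q = 0\<^sub>v n" using M q(1) row by (intro eq_vecI) auto
    moreover have "vec n q \<noteq> 0\<^sub>v n" using q(2) by (auto simp: vec_eq_iff)
    ultimately show "\<exists>v. v \<in> carrier_vec n \<and> v \<noteq> 0\<^sub>v n \<and> M *\<^sub>v v = 0\<^sub>v n"
      by (meson vec_carrier)
  qed
  finally show ?thesis by blast
qed

lemma kernel_trivial_iff_transpose_kernel_trivial:
  fixes A :: "nat \<Rightarrow> nat \<Rightarrow> real"
  shows "(\<forall>q. (\<forall>r<n. (\<Sum>i<n. A r i * q i) = 0) \<longrightarrow> (\<forall>i<n. q i = 0)) \<longleftrightarrow>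
         (\<forall>q. (\<forall>i<n. (\<Sum>r<n. q r * A r i) = 0) \<longrightarrow> (\<forall>r<n. q r = 0))"
proof -
  define M :: "real mat" where "M = mat n n (\<lambda>(r, i). A r i)"
  have M: "M \<in> carrier_mat n n" "transpose_mat M \<in> carrier_mat n n" by (simp_all add: M_def)
  have "(\<Sum>i<n. M $$ (r, i) * q i) = (\<Sum>i<n. A r i * q i)"
    and "(\<Sum>r<n. transpose_mat M $$ (i, r) * q r) = (\<Sum>r<n. q r * A r i)"
    if "r < n" "i < n" for r i q using that by (auto intro!: sum.cong simp: M_def)
  then have "det M \<noteq> 0 \<longleftrightarrow> (\<forall>q. (\<forall>r<n. (\<Sum>i<n. A r i * q i) = 0) \<longrightarrow> (\<forall>i<n. q i = 0))"
    and "det (transpose_mat M) \<noteq> 0 \<longleftrightarrow>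
      (\<forall>q. (\<forall>i<n. (\<Sum>r<n. q r * A r i) = 0) \<longrightarrow> (\<forall>r<n. q r = 0))"
    by (simp_all add: det_nonzero_iff_kernel_trivial[OF M(1)]
        det_nonzero_iff_kernel_trivial[OF M(2)])
  then show ?thesis by (simp add: det_transpose[OF M(1)])
qed

lemma lin_indep_iff_kernel_trivial:
  assumes "finite V" and "card V = n"
  shows "lin_indep n V \<longleftrightarrow> (\<forall>q. (\<forall>v\<in>V. (\<Sum>i<n. v i * q i) = 0) \<longrightarrow> (\<forall>i<n. q i = 0))"
proof -
  obtain e where e: "bij_betw e {..<n} V"
    using assms ex_bij_betw_nat_finite[of V] by (auto simp: lessThan_atLeast0)
  have V: "V = e ` {..<n}" and inj: "inj_on e {..<n}" using e by (auto simp: bij_betw_def)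
  have reindex: "(\<Sum>v\<in>V. w v * v i) = (\<Sum>r<n. w (e r) * e r i)" for w :: "_ \<Rightarrow> real" and i
    unfolding V using sum.reindex[OF inj] by simp
  have "lin_indep n V \<longleftrightarrow> (\<forall>u. (\<forall>i<n. (\<Sum>r<n. u r * e r i) = 0) \<longrightarrow> (\<forall>r<n. u r = 0))"
  proof
    assume indep: "lin_indep n V"
    show "\<forall>u. (\<forall>i<n. (\<Sum>r<n. u r * e r i) = 0) \<longrightarrow> (\<forall>r<n. u r = 0)"
    proof (intro allI impI)
      fix u :: "nat \<Rightarrow> real" and r assume u: "\<forall>i<n. (\<Sum>r<n. u r * e r i) = 0" and r: "r < n"
      define w where "w = u \<circ> the_inv_into {..<n} e"
      have w: "w (e r) = u r" if "r < n" for r using that inj by (simp add: w_def the_inv_into_f_f)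
      then have "\<forall>i<n. (\<Sum>v\<in>V. w v * v i) = 0" using u by (simp add: reindex)
      then have "w (e r) = 0" using indep r V unfolding lin_indep_def by blast
      then show "u r = 0" using w r by simp
    qed
  next
    assume "\<forall>u. (\<forall>i<n. (\<Sum>r<n. u r * e r i) = 0) \<longrightarrow> (\<forall>r<n. u r = 0)"
    then show "lin_indep n V"
      unfolding lin_indep_def V by (auto simp: reindex[unfolded V] assms(1)[unfolded V])
  qed
  also have "\<dots> \<longleftrightarrow> (\<forall>q. (\<forall>r<n. (\<Sum>i<n. e r i * q i) = 0) \<longrightarrow> (\<forall>i<n. q i = 0))"
    by (rule kernel_trivial_iff_transpose_kernel_trivial[symmetric])
  also have "\<dots> \<longleftrightarrow> (\<forall>q. (\<forall>v\<in>V. (\<Sum>i<n. v i * q i) = 0) \<longrightarrow> (\<forall>i<n. q i = 0))"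
    by (auto simp: V)
  finally show ?thesis .
qed

section \<open>Second differences\<close>

definition second_diff :: "(nat \<Rightarrow> real) \<Rightarrow> nat \<Rightarrow> real" where
  "second_diff f j = f (j + 1) - 2 * f j + f (j - 1)"

lemma second_diff_max_principle:
  fixes h :: "nat \<Rightarrow> real"
  assumes "0 \<in> B" "N \<in> B" and boundary: "\<And>j. j \<in> B \<Longrightarrow> j \<le> N \<Longrightarrow> h j \<le> 0"
    and subharmonic: "\<And>j. 0 < j \<Longrightarrow> j < N \<Longrightarrow> j \<notin> B \<Longrightarrow> second_diff h j \<ge> 0"
    and "j \<le> N"
  shows "h j \<le> 0"
proof (rule ccontr)
  assume "\<not> h j \<le> 0"
  define M where "M = Max (h ` {..N})"
  have le_M: "h i \<le> M" if "i \<le> N" for i unfolding M_def using that by (intro Max_ge) auto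
  have "M \<in> h ` {..N}" unfolding M_def by (intro Max_in) auto
  then obtain i where i: "i \<le> N \<and> h i = M" by auto
  define i0 where "i0 = (LEAST i. i \<le> N \<and> h i = M)"
  have i0: "i0 \<le> N" "h i0 = M"
    using LeastI[of "\<lambda>i. i \<le> N \<and> h i = M", OF i] by (auto simp: i0_def)
  have "M > 0" using le_M[OF \<open>j \<le> N\<close>] \<open>\<not> h j \<le> 0\<close> by simp
  then have "i0 \<notin> B" using boundary i0 by force
  then have "0 < i0" "i0 < N" using i0(1) assms(1,2) by (auto intro: Nat.gr0I le_neq_trans)
  then have "h (i0 - 1) + h (i0 + 1) \<ge> 2 * M"
    using subharmonic[of i0] \<open>i0 \<notin> B\<close> i0(2) by (simp add: second_diff_def)
  moreover have "h (i0 - 1) \<le> M" "h (i0 + 1) \<le> M" using le_M \<open>i0 < N\<close> by auto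
  ultimately have "h (i0 - 1) = M" by linarith
  moreover have "\<not> (i0 - 1 \<le> N \<and> h (i0 - 1) = M)"
    unfolding i0_def by (rule not_less_Least) (use \<open>0 < i0\<close> i0_def in simp)
  ultimately show False using i0(1) by simp
qed

lemma second_diff_unique:
  fixes f g :: "nat \<Rightarrow> real"
  assumes "0 \<in> B" "N \<in> B" and "\<And>j. j \<in> B \<Longrightarrow> j \<le> N \<Longrightarrow> f j = g j"
    and "\<And>j. 0 < j \<Longrightarrow> j < N \<Longrightarrow> j \<notin> B \<Longrightarrow> second_diff f j = second_diff g j"
    and "j \<le> N"
  shows "f j = g j"
proof -
  have diff: "second_diff (\<lambda>i. u i - v i) i = second_diff u i - second_diff v i"
    for u v :: "nat \<Rightarrow> real" and i by (simp add: second_diff_def)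
  have "f j - g j \<le> 0"
    by (rule second_diff_max_principle[OF assms(1,2), where h = "\<lambda>i. f i - g i"])
      (simp_all add: diff assms(3-5))
  moreover have "g j - f j \<le> 0"
    by (rule second_diff_max_principle[OF assms(1,2), where h = "\<lambda>i. g i - f i"])
      (simp_all add: diff assms(3-5))
  ultimately show ?thesis by simp
qed

definition ramp :: "nat \<Rightarrow> nat \<Rightarrow> real" where
  "ramp a j = max 0 (real j - real a)"

lemma second_diff_ramp: "0 < j \<Longrightarrow> second_diff (ramp a) j = (if j = a then 1 else 0)"
  by (auto simp: second_diff_def ramp_def of_nat_diff max_def)

definition hat :: "nat \<Rightarrow> nat \<Rightarrow> nat \<Rightarrow> nat \<Rightarrow> real" where
  "hat l k r j =
     (real r - real k) * ramp l j - (real r - real l) * ramp k j + (real k - real l) * ramp r j"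

lemma second_diff_hat:
  assumes "0 < j"
  shows "second_diff (hat l k r) j =
    (if j = l then real r - real k else 0) - (if j = k then real r - real l else 0)
      + (if j = r then real k - real l else 0)"
proof -
  have "second_diff (hat l k r) j = (real r - real k) * second_diff (ramp l) j
      - (real r - real l) * second_diff (ramp k) j + (real k - real l) * second_diff (ramp r) j"
    by (simp add: second_diff_def hat_def algebra_simps)
  then show ?thesis by (simp add: second_diff_ramp[OF assms])
qed

lemma hat_eq_0_outside: "l < k \<Longrightarrow> k < r \<Longrightarrow> j \<le> l \<or> r \<le> j \<Longrightarrow> hat l k r j = 0"
  by (auto simp: hat_def ramp_def max_def algebra_simps)

definition lower_pt :: "nat set \<Rightarrow> nat \<Rightarrow> nat" where
  "lower_pt S j = Max {s \<in> insert 0 S. s \<le> j}"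

definition upper_pt :: "nat \<Rightarrow> nat set \<Rightarrow> nat \<Rightarrow> nat" where
  "upper_pt m S j = Min {s \<in> insert (m + 1) S. j \<le> s}"

definition arches :: "nat \<Rightarrow> nat set \<Rightarrow> nat \<Rightarrow> real" where
  "arches m S j = (real j - real (lower_pt S j)) * (real (upper_pt m S j) - real j)"

definition arch_kink :: "nat \<Rightarrow> nat set \<Rightarrow> nat \<Rightarrow> real" where
  "arch_kink m S k = real (upper_pt m S (k + 1)) - real (lower_pt S (k - 1))"

lemma lower_pt_le: "lower_pt S j \<le> j"
  and lower_pt_mem: "lower_pt S j \<in> insert 0 S"
proof -
  have "lower_pt S j \<in> {s \<in> insert 0 S. s \<le> j}"
    unfolding lower_pt_def by (rule Max_in) (auto intro: finite_subset[of _ "{..j}"])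
  then show "lower_pt S j \<le> j" "lower_pt S j \<in> insert 0 S" by auto
qed

lemma lower_pt_self: "j \<in> insert 0 S \<Longrightarrow> lower_pt S j = j"
  using lower_pt_le[of S j] unfolding lower_pt_def
  by (intro antisym Max_ge) (auto intro: finite_subset[of _ "{..j}"])

lemma lower_pt_step: "j \<notin> S \<Longrightarrow> 0 < j \<Longrightarrow> lower_pt S j = lower_pt S (j - 1)"
  unfolding lower_pt_def by (rule arg_cong[where f = Max]) (auto simp: le_less)

context
  fixes m :: nat and S :: "nat set"
  assumes S: "S \<subseteq> {1..m}"
begin

lemma upper_pt_ge: "j \<le> m + 1 \<Longrightarrow> j \<le> upper_pt m S j"
  and upper_pt_mem: "j \<le> m + 1 \<Longrightarrow> upper_pt m S j \<in> insert (m + 1) S"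
proof -
  assume "j \<le> m + 1"
  moreover have "finite S" using S finite_subset by blast
  ultimately have "upper_pt m S j \<in> {s \<in> insert (m + 1) S. j \<le> s}"
    unfolding upper_pt_def by (intro Min_in) auto
  then show "j \<le> upper_pt m S j" "upper_pt m S j \<in> insert (m + 1) S" by auto
qed

lemma upper_pt_self: "j \<in> insert (m + 1) S \<Longrightarrow> upper_pt m S j = j"
  using upper_pt_ge[of j] upper_pt_mem[of j] S finite_subset[OF S] unfolding upper_pt_def
  by (intro antisym Min_le) auto

lemma upper_pt_step: "j \<notin> S \<Longrightarrow> j \<le> m \<Longrightarrow> upper_pt m S j = upper_pt m S (j + 1)"
  unfolding upper_pt_def by (rule arg_cong[where f = Min]) (auto simp: le_less)

lemma arches_eq_0: "j \<in> insert 0 (insert (m + 1) S) \<Longrightarrow> arches m S j = 0"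
  unfolding arches_def using lower_pt_self[of j S] upper_pt_self[of j] by auto

lemma arches_nonneg: "j \<le> m + 1 \<Longrightarrow> arches m S j \<ge> 0"
  unfolding arches_def using lower_pt_le[of S j] upper_pt_ge[of j] by simp

lemma arch_kink_pos: "k \<in> S \<Longrightarrow> arch_kink m S k > 0"
  using S upper_pt_ge[of "k + 1"] lower_pt_le[of S "k - 1"] unfolding arch_kink_def by force

lemma second_diff_arches:
  assumes j: "1 \<le> j" "j \<le> m"
  shows "second_diff (arches m S) j = (if j \<in> S then arch_kink m S j - 2 else - 2)"
proof -
  have at_pred: "arches m S (j - 1) =
      (real (j - 1) - real (lower_pt S (j - 1))) * (real (upper_pt m S j) - real (j - 1))"
  proof (cases "j - 1 \<in> insert 0 S")
    case True then show ?thesis unfolding arches_def using lower_pt_self[OF True] by simp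
  next
    case False then show ?thesis unfolding arches_def using upper_pt_step[of "j - 1"] j by auto
  qed
  have at_succ: "arches m S (j + 1) =
      (real (j + 1) - real (lower_pt S j)) * (real (upper_pt m S (j + 1)) - real (j + 1))"
  proof (cases "j + 1 \<in> insert (m + 1) S")
    case True then show ?thesis unfolding arches_def using upper_pt_self[OF True] by simp
  next
    case False then show ?thesis unfolding arches_def using lower_pt_step[of "j + 1" S] by auto
  qed
  show ?thesis
  proof (cases "j \<in> S")
    case True
    then have "lower_pt S j = j" "upper_pt m S j = j" using lower_pt_self upper_pt_self by auto
    with True j show ?thesis
      unfolding second_diff_def at_pred at_succ
      by (simp add: arches_def arch_kink_def algebra_simps of_nat_diff)
  next
    case False
    then have "lower_pt S j = lower_pt S (j - 1)" "upper_pt m S j = upper_pt m S (j + 1)"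
      using lower_pt_step upper_pt_step j by auto
    with False j show ?thesis
      unfolding second_diff_def at_pred at_succ by (simp add: arches_def algebra_simps of_nat_diff)
  qed
qed

end

section \<open>Coordinates on the polytope\<close>

lemma sum_fun_apply: "(sum F A) x = (\<Sum>a\<in>A. F a x :: 'b :: comm_monoid_add)"
  by (induction A rule: infinite_finite_induct) auto

definition lform :: "nat \<Rightarrow> (nat \<Rightarrow> real) \<Rightarrow> (nat \<Rightarrow> real) \<Rightarrow> real" where
  "lform d a q = (\<Sum>i<pdim d. a i * q i)"

lemma lval_eq: "lval d c p = lform d (fst c) p + snd c"
  by (simp add: lval_def lform_def)

lemma lform_ev: "k < pdim d \<Longrightarrow> lform d (ev k) q = q k"
  unfolding lform_def ev_def by (simp add: if_distrib[of "\<lambda>x. x * _"] cong: if_cong)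

lemma lform_add: "lform d (a + b) q = lform d a q + lform d b q"
  by (simp add: lform_def algebra_simps sum.distrib)

lemma lform_diff: "lform d (a - b) q = lform d a q - lform d b q"
  by (simp add: lform_def algebra_simps sum_subtractf)

lemma lform_scale: "lform d (\<lambda>i. c * a i) q = c * lform d a q"
  by (simp add: lform_def sum_distrib_left algebra_simps)

lemma lform_sum: "lform d (sum F A) q = (\<Sum>k\<in>A. lform d (F k) q)"
  unfolding lform_def sum_fun_apply by (simp add: sum_distrib_right sum.swap[of _ A])

(* Keeps d = m + 2 from being rewritten to Suc (Suc m), so that the facts below about
   Pd (m + 2), ineqs (m + 2) etc. stay applicable. *)
declare add_2_eq_Suc' [simp del]

lemma pdim_eq [simp]: "pdim (m + 2) = 2 * m + 1"
  by (simp add: pdim_def)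

(*
  The j-th cut inequality involves x_m, ..., x_(m+2-j), which is why the
  x-gaps enter the curvature in reverse order.
*)
definition x_coord :: "nat \<Rightarrow> (nat \<Rightarrow> real) \<Rightarrow> nat \<Rightarrow> real" where
  "x_coord m q j = (if 1 \<le> j \<and> j \<le> m then q (j - 1) else 0)"

definition y_coord :: "nat \<Rightarrow> (nat \<Rightarrow> real) \<Rightarrow> nat \<Rightarrow> real" where
  "y_coord m q j = (if 1 \<le> j \<and> j \<le> m then q (m - 1 + j) else 0)"

definition z_coord :: "nat \<Rightarrow> (nat \<Rightarrow> real) \<Rightarrow> real" where
  "z_coord m q = q (2 * m)"

definition x_gap :: "nat \<Rightarrow> (nat \<Rightarrow> real) \<Rightarrow> nat \<Rightarrow> real" where
  "x_gap m q k = x_coord m q k - x_coord m q (k + 1)"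

definition y_gap :: "nat \<Rightarrow> (nat \<Rightarrow> real) \<Rightarrow> nat \<Rightarrow> real" where
  "y_gap m q k = y_coord m q k - y_coord m q (k + 1)"

definition cut_form :: "nat \<Rightarrow> (nat \<Rightarrow> real) \<Rightarrow> nat \<Rightarrow> real" where
  "cut_form m q j = real j * z_coord m q + (\<Sum>i\<in>{0..<j - 1}. x_coord m q (m - i))
     - (\<Sum>i\<in>{1..j}. y_coord m q i)"

definition slack :: "nat \<Rightarrow> (nat \<Rightarrow> real) \<Rightarrow> nat \<Rightarrow> real" where
  "slack m q j = cut_form m q j + real j * (real m + 1 - real j)"

definition balance :: "nat \<Rightarrow> (nat \<Rightarrow> real) \<Rightarrow> real" where
  "balance m q =
     (\<Sum>j\<in>{1..m}. y_coord m q j) - (\<Sum>j\<in>{1..m}. x_coord m q j) - (real m + 1) * z_coord m q"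

definition curvature :: "nat \<Rightarrow> (nat \<Rightarrow> real) \<Rightarrow> nat \<Rightarrow> real" where
  "curvature m q j = x_gap m q (m + 1 - j) + y_gap m q j"

lemma point_eq_coords:
  assumes "i < 2 * m + 1"
  shows "q i = (if i < m then x_coord m q (i + 1)
                else if i < 2 * m then y_coord m q (i + 1 - m) else z_coord m q)"
proof -
  have "i < m \<or> (m \<le> i \<and> i < 2 * m) \<or> i = 2 * m" using assms by linarith
  then show ?thesis by (auto simp: x_coord_def y_coord_def z_coord_def)
qed

lemma x_coord_eq_sum_x_gap: "1 \<le> j \<Longrightarrow> x_coord m q j = (\<Sum>k\<in>{j..m}. x_gap m q k)"
  using sum_Suc_diff[of j m "\<lambda>k. - x_coord m q k"]
  by (cases "j \<le> m + 1") (simp_all add: x_gap_def sum_negf[symmetric] x_coord_def)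

lemma y_coord_eq_sum_y_gap: "1 \<le> j \<Longrightarrow> y_coord m q j = (\<Sum>k\<in>{j..m}. y_gap m q k)"
  using sum_Suc_diff[of j m "\<lambda>k. - y_coord m q k"]
  by (cases "j \<le> m + 1") (simp_all add: y_gap_def sum_negf[symmetric] y_coord_def)

lemma cut_form_0: "cut_form m q 0 = 0"
  by (simp add: cut_form_def)

lemma cut_form_Suc:
  "cut_form m q (Suc j) =
     cut_form m q j + z_coord m q + x_coord m q (m + 1 - j) - y_coord m q (Suc j)"
proof -
  have "(\<Sum>i\<in>{0..<j}. x_coord m q (m - i)) =
      (\<Sum>i\<in>{0..<j - 1}. x_coord m q (m - i)) + x_coord m q (m + 1 - j)"
    by (cases j) (simp_all add: x_coord_def)
  then show ?thesis by (simp add: cut_form_def algebra_simps)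
qed

lemma cut_form_top: "cut_form m q (m + 1) = - balance m q"
proof -
  have "(\<Sum>i\<in>{0..<m}. x_coord m q (m - i)) = (\<Sum>j\<in>{1..m}. x_coord m q j)"
    by (rule sum.reindex_bij_witness[of _ "\<lambda>j. m - j" "\<lambda>i. m - i"]) auto
  moreover have "(\<Sum>i\<in>{1..m + 1}. y_coord m q i) = (\<Sum>j\<in>{1..m}. y_coord m q j)"
    by (simp add: y_coord_def)
  moreover have "cut_form m q (m + 1) = real (m + 1) * z_coord m q
      + (\<Sum>i\<in>{0..<m}. x_coord m q (m - i)) - (\<Sum>i\<in>{1..m + 1}. y_coord m q i)"
    unfolding cut_form_def by simp
  ultimately show ?thesis unfolding balance_def by (simp add: algebra_simps)
qed

lemma second_diff_cut_form:
  assumes "j \<in> {1..m}"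
  shows "second_diff (cut_form m q) j = curvature m q j"
proof -
  obtain i where "j = Suc i" using assms by (cases j) auto
  moreover have "m + 1 - j + 1 = m + 1 - i" using assms \<open>j = Suc i\<close> by simp
  ultimately show ?thesis
    by (simp add: second_diff_def cut_form_Suc curvature_def x_gap_def y_gap_def algebra_simps)
qed

lemma slack_0: "slack m q 0 = 0"
  and slack_top: "slack m q (m + 1) = - balance m q"
  using cut_form_top[of m q] by (simp_all add: slack_def cut_form_0)

lemma second_diff_slack: "j \<in> {1..m} \<Longrightarrow> second_diff (slack m q) j = curvature m q j - 2"
  using second_diff_cut_form[of j m q]
  by (auto simp: second_diff_def slack_def of_nat_diff algebra_simps)

lemma zero_if_gaps_zero:
  assumes "\<And>k. k \<in> {1..m} \<Longrightarrow> x_gap m q k = 0" "\<And>k. k \<in> {1..m} \<Longrightarrow> y_gap m q k = 0"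
    and "balance m q = 0" and "i < 2 * m + 1"
  shows "q i = 0"
proof -
  have x: "x_coord m q j = 0" for j
    using x_coord_eq_sum_x_gap[of j m q] assms(1) by (cases "1 \<le> j") (simp_all add: x_coord_def)
  have y: "y_coord m q j = 0" for j
    using y_coord_eq_sum_y_gap[of j m q] assms(2) by (cases "1 \<le> j") (simp_all add: y_coord_def)
  have "z_coord m q = 0" using assms(3) x y by (simp add: balance_def)
  with x y show ?thesis using point_eq_coords[OF assms(4), of q] by simp
qed

lemma eq_if_gaps_eq:
  assumes "\<And>k. k \<in> {1..m} \<Longrightarrow> x_gap m p k = x_gap m q k" "\<And>k. k \<in> {1..m} \<Longrightarrow> y_gap m p k = y_gap m q k"
    and "balance m p = balance m q" and "i < 2 * m + 1"
  shows "p i = q i"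
proof -
  let ?r = "\<lambda>i. p i - q i"
  have coords: "x_coord m ?r j = x_coord m p j - x_coord m q j"
    "y_coord m ?r j = y_coord m p j - y_coord m q j"
    "z_coord m ?r = z_coord m p - z_coord m q" for j
    by (simp_all add: x_coord_def y_coord_def z_coord_def)
  have "x_gap m ?r k = 0" "y_gap m ?r k = 0" if "k \<in> {1..m}" for k
    using assms(1,2)[OF that] unfolding x_gap_def y_gap_def coords by simp_all
  moreover have "balance m ?r = 0"
    using assms(3) unfolding balance_def coords sum_subtractf by (simp add: algebra_simps)
  ultimately have "?r i = 0" by (rule zero_if_gaps_zero[OF _ _ _ assms(4)])
  then show ?thesis by simp
qed

definition x_gap_vec :: "nat \<Rightarrow> nat \<Rightarrow> nat \<Rightarrow> real" where
  "x_gap_vec m j = (if j < m then ev (xi j) - ev (xi (j + 1)) else ev (xi j))"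

definition y_gap_vec :: "nat \<Rightarrow> nat \<Rightarrow> nat \<Rightarrow> real" where
  "y_gap_vec m j =
     (if j < m then ev (yi (m + 2) j) - ev (yi (m + 2) (j + 1)) else ev (yi (m + 2) j))"

definition cut_vec :: "nat \<Rightarrow> nat \<Rightarrow> nat \<Rightarrow> real" where
  "cut_vec m j = (\<lambda>i. real j * ev (zi (m + 2)) i) + (\<Sum>i\<in>{0..<j - 1}. ev (xi (m - i)))
     - (\<Sum>i\<in>{1..j}. ev (yi (m + 2) i))"

lemma lform_ev_xi: "j \<in> {1..m} \<Longrightarrow> lform (m + 2) (ev (xi j)) q = x_coord m q j"
  and lform_ev_yi: "j \<in> {1..m} \<Longrightarrow> lform (m + 2) (ev (yi (m + 2) j)) q = y_coord m q j"
  and lform_ev_zi: "lform (m + 2) (ev (zi (m + 2))) q = z_coord m q"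
  by (auto simp: lform_ev pdim_def xi_def yi_def zi_def x_coord_def y_coord_def z_coord_def)

lemma lform_x_gap_vec: "j \<in> {1..m} \<Longrightarrow> lform (m + 2) (x_gap_vec m j) q = x_gap m q j"
  using lform_ev_xi[of j m q] lform_ev_xi[of "j + 1" m q]
  by (cases "j < m") (simp_all add: x_gap_vec_def x_gap_def lform_diff x_coord_def)

lemma lform_y_gap_vec: "j \<in> {1..m} \<Longrightarrow> lform (m + 2) (y_gap_vec m j) q = y_gap m q j"
  using lform_ev_yi[of j m q] lform_ev_yi[of "j + 1" m q]
  by (cases "j < m") (simp_all add: y_gap_vec_def y_gap_def lform_diff y_coord_def)

lemma lform_cut_vec:
  assumes "j \<in> {1..m}"
  shows "lform (m + 2) (cut_vec m j) q = cut_form m q j"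
proof -
  have "(\<Sum>i\<in>{0..<j - 1}. lform (m + 2) (ev (xi (m - i))) q) = (\<Sum>i\<in>{0..<j - 1}. x_coord m q (m - i))"
    "(\<Sum>i\<in>{1..j}. lform (m + 2) (ev (yi (m + 2) i)) q) = (\<Sum>i\<in>{1..j}. y_coord m q i)"
    using assms by (auto intro!: sum.cong simp: lform_ev_xi lform_ev_yi)
  then show ?thesis
    unfolding cut_vec_def cut_form_def lform_diff lform_add lform_sum lform_scale lform_ev_zi
    by simp
qed

lemma lform_eqc: "lform (m + 2) (fst (eqc (m + 2))) q = balance m q"
proof -
  have "(\<Sum>i\<in>{1..m}. lform (m + 2) (ev (xi i)) q) = (\<Sum>i\<in>{1..m}. x_coord m q i)"
    "(\<Sum>i\<in>{1..m}. lform (m + 2) (ev (yi (m + 2) i)) q) = (\<Sum>i\<in>{1..m}. y_coord m q i)"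
    by (auto intro!: sum.cong simp: lform_ev_xi lform_ev_yi)
  then show ?thesis
    unfolding eqc_def balance_def fst_conv lform_diff lform_sum lform_scale lform_ev_zi by simp
qed

lemma x_gap_vec_in_ineqs: "j \<in> {1..m} \<Longrightarrow> (x_gap_vec m j, 0) \<in> ineqs (m + 2)"
  and y_gap_vec_in_ineqs: "j \<in> {1..m} \<Longrightarrow> (y_gap_vec m j, 0) \<in> ineqs (m + 2)"
  and cut_vec_in_ineqs: "j \<in> {1..m} \<Longrightarrow> (cut_vec m j, real j * (real m + 1 - real j)) \<in> ineqs (m + 2)"
  unfolding ineqs_def x_gap_vec_def y_gap_vec_def cut_vec_def by auto

lemma ineqs_cases:
  assumes "c \<in> ineqs (m + 2)"
  obtains (x_gap) j where "j \<in> {1..m}" "c = (x_gap_vec m j, 0)"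
  | (y_gap) j where "j \<in> {1..m}" "c = (y_gap_vec m j, 0)"
  | (x_pos) j where "j \<in> {1..m}" "c = (ev (xi j), 0)"
  | (y_pos) j where "j \<in> {1..m}" "c = (ev (yi (m + 2) j), 0)"
  | (cut) j where "j \<in> {1..m}" "c = (cut_vec m j, real j * (real m + 1 - real j))"
  using assms unfolding ineqs_def
proof (elim UnE CollectE exE conjE)
  fix j assume "c = (ev (xi j) - ev (xi (j + 1)), 0)" "1 \<le> j" "j \<le> m + 2 - 3"
  then show thesis using x_gap[of j] by (simp add: x_gap_vec_def)
next
  fix j assume "c = (ev (yi (m + 2) j) - ev (yi (m + 2) (j + 1)), 0)" "1 \<le> j" "j \<le> m + 2 - 3"
  then show thesis using y_gap[of j] by (simp add: y_gap_vec_def)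
next
  fix j assume "c = (ev (xi j), 0)" "1 \<le> j" "j \<le> m + 2 - 2"
  then show thesis using x_pos[of j] by simp
next
  fix j assume "c = (ev (yi (m + 2) j), 0)" "1 \<le> j" "j \<le> m + 2 - 2"
  then show thesis using y_pos[of j] by simp
next
  fix j assume "c = ((\<lambda>i. real j * ev (zi (m + 2)) i) + (\<Sum>i\<in>{0..<j - 1}. ev (xi (m + 2 - 2 - i)))
      - (\<Sum>i\<in>{1..j}. ev (yi (m + 2) i)), real j * (real (m + 2) - 1 - real j))"
    "1 \<le> j" "j \<le> m + 2 - 2"
  then show thesis using cut[of j] by (simp add: cut_vec_def)
qed

lemma lval_cut_vec:
  "j \<in> {1..m} \<Longrightarrow> lval (m + 2) (cut_vec m j, real j * (real m + 1 - real j)) p = slack m p j"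
  by (simp add: lval_eq lform_cut_vec slack_def)

lemma lval_eqc: "lval (m + 2) (eqc (m + 2)) p = balance m p"
  by (simp add: lval_eq lform_eqc) (simp add: eqc_def)

lemma slack_1: "slack m q 1 = z_coord m q - y_coord m q 1 + real m"
  using cut_form_Suc[of m q 0] by (simp add: slack_def cut_form_0 x_coord_def)

lemma x_coord_bounds:
  assumes "\<And>k. k \<in> {1..m} \<Longrightarrow> 0 \<le> x_gap m q k"
  shows "0 \<le> x_coord m q j \<and> x_coord m q j \<le> x_coord m q 1"
proof -
  have "0 \<le> x_coord m q 1" using x_coord_eq_sum_x_gap[of 1 m q] assms by (auto intro!: sum_nonneg)
  moreover have "0 \<le> x_coord m q j \<and> x_coord m q j \<le> x_coord m q 1" if "1 \<le> j"
    using x_coord_eq_sum_x_gap[OF that] x_coord_eq_sum_x_gap[of 1 m q] assms that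
    by (auto intro!: sum_nonneg sum_mono2)
  ultimately show ?thesis by (cases "j = 0") (auto simp: x_coord_def)
qed

lemma y_coord_bounds:
  assumes "\<And>k. k \<in> {1..m} \<Longrightarrow> 0 \<le> y_gap m q k"
  shows "0 \<le> y_coord m q j \<and> y_coord m q j \<le> y_coord m q 1"
proof -
  have "0 \<le> y_coord m q 1" using y_coord_eq_sum_y_gap[of 1 m q] assms by (auto intro!: sum_nonneg)
  moreover have "0 \<le> y_coord m q j \<and> y_coord m q j \<le> y_coord m q 1" if "1 \<le> j"
    using y_coord_eq_sum_y_gap[OF that] y_coord_eq_sum_y_gap[of 1 m q] assms that
    by (auto intro!: sum_nonneg sum_mono2)
  ultimately show ?thesis by (cases "j = 0") (auto simp: y_coord_def)
qed

lemma mem_Pd_iff: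
  "p \<in> Pd (m + 2) \<longleftrightarrow> (\<forall>i \<ge> 2 * m + 1. p i = 0) \<and> (\<forall>k\<in>{1..m}. 0 \<le> x_gap m p k \<and> 0 \<le> y_gap m p k)
     \<and> (\<forall>j\<in>{1..m}. 0 \<le> slack m p j) \<and> balance m p = 0"
  (is "_ \<longleftrightarrow> ?support \<and> ?gaps \<and> ?slack \<and> ?balance")
proof
  assume p: "p \<in> Pd (m + 2)"
  then have ineq: "0 \<le> lval (m + 2) c p" if "c \<in> ineqs (m + 2)" for c
    using that by (simp add: Pd_def)
  have "0 \<le> x_gap m p k \<and> 0 \<le> y_gap m p k" "0 \<le> slack m p k" if "k \<in> {1..m}" for k
    using ineq[OF x_gap_vec_in_ineqs[OF that]] ineq[OF y_gap_vec_in_ineqs[OF that]]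
      ineq[OF cut_vec_in_ineqs[OF that]] lval_cut_vec[OF that, of p]
    by (simp_all add: lval_eq lform_x_gap_vec[OF that] lform_y_gap_vec[OF that])
  with p show "?support \<and> ?gaps \<and> ?slack \<and> ?balance" by (simp add: Pd_def lval_eqc)
next
  assume H: "?support \<and> ?gaps \<and> ?slack \<and> ?balance"
  then have "0 \<le> x_coord m p j" "0 \<le> y_coord m p j" for j
    using x_coord_bounds[of m p j] y_coord_bounds[of m p j] by auto
  moreover have "0 \<le> lval (m + 2) c p" if "c \<in> ineqs (m + 2)" for c
    using that by (cases rule: ineqs_cases)
      (use H calculation in \<open>auto simp: lval_eq lform_x_gap_vec lform_y_gap_vec lform_ev_xi
        lform_ev_yi lform_cut_vec slack_def\<close>)
  ultimately show "p \<in> Pd (m + 2)" using H by (simp add: Pd_def lval_eqc)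
qed

lemma Pd_bounded:
  assumes p: "p \<in> Pd (m + 2)" and m: "1 \<le> m"
  shows "\<bar>p i\<bar> \<le> 2 * real m"
proof -
  note facts = p[unfolded mem_Pd_iff]
  have x: "0 \<le> x_coord m p j \<and> x_coord m p j \<le> x_coord m p 1" for j
    using facts by (intro x_coord_bounds) auto
  have y: "0 \<le> y_coord m p j \<and> y_coord m p j \<le> y_coord m p 1" for j
    using facts by (intro y_coord_bounds) auto
  note slack_1[of m p]
  moreover have "slack m p m = real m - z_coord m p - x_coord m p 1"
    using cut_form_Suc[of m p m] cut_form_top[of m p] facts by (simp add: slack_def y_coord_def)
  moreover have "0 \<le> slack m p 1" "0 \<le> slack m p m" using facts m by auto
  ultimately have "\<bar>x_coord m p j\<bar> \<le> 2 * real m" "\<bar>y_coord m p j\<bar> \<le> 2 * real m"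
    "\<bar>z_coord m p\<bar> \<le> 2 * real m" for j
    using x[of j] y[of j] x[of 1] y[of 1] by linarith+
  then show ?thesis using point_eq_coords[of i m p] facts by (cases "i < 2 * m + 1") auto
qed

definition of_gaps :: "nat \<Rightarrow> (nat \<Rightarrow> real) \<Rightarrow> (nat \<Rightarrow> real) \<Rightarrow> nat \<Rightarrow> real" where
  "of_gaps m a b i =
    (let x = (\<lambda>j. \<Sum>k\<in>{1..m + 1 - j}. a k); y = (\<lambda>j. \<Sum>k\<in>{j..m}. b k)
     in if i < m then x (i + 1) else if i < 2 * m then y (i + 1 - m)
        else if i = 2 * m then ((\<Sum>j\<in>{1..m}. y j) - (\<Sum>j\<in>{1..m}. x j)) / (real m + 1) else 0)"

lemma x_coord_of_gaps: "1 \<le> j \<Longrightarrow> x_coord m (of_gaps m a b) j = (\<Sum>k\<in>{1..m + 1 - j}. a k)"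
  by (auto simp: x_coord_def of_gaps_def)

lemma y_coord_of_gaps: "1 \<le> j \<Longrightarrow> y_coord m (of_gaps m a b) j = (\<Sum>k\<in>{j..m}. b k)"
  by (auto simp: y_coord_def of_gaps_def)

lemma of_gaps_eq_0: "2 * m + 1 \<le> i \<Longrightarrow> of_gaps m a b i = 0"
  by (simp add: of_gaps_def)

lemma x_gap_of_gaps: "k \<in> {1..m} \<Longrightarrow> x_gap m (of_gaps m a b) k = a (m + 1 - k)"
  by (simp add: x_gap_def x_coord_of_gaps Suc_diff_le)

lemma y_gap_of_gaps: "k \<in> {1..m} \<Longrightarrow> y_gap m (of_gaps m a b) k = b k"
  by (simp add: y_gap_def y_coord_of_gaps sum.atLeast_Suc_atMost)

lemma curvature_of_gaps:
  assumes "j \<in> {1..m}"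
  shows "curvature m (of_gaps m a b) j = a j + b j"
proof -
  have "m + 1 - j \<in> {1..m}" "m + 1 - (m + 1 - j) = j" using assms by auto
  then show ?thesis using assms by (simp add: curvature_def x_gap_of_gaps y_gap_of_gaps)
qed

lemma balance_of_gaps: "balance m (of_gaps m a b) = 0"
proof -
  have "(\<Sum>j\<in>{1..m}. x_coord m (of_gaps m a b) j) = (\<Sum>j\<in>{1..m}. \<Sum>k\<in>{1..m + 1 - j}. a k)"
    "(\<Sum>j\<in>{1..m}. y_coord m (of_gaps m a b) j) = (\<Sum>j\<in>{1..m}. \<Sum>k\<in>{j..m}. b k)"
    by (auto intro!: sum.cong simp: x_coord_of_gaps y_coord_of_gaps)
  moreover have "real m + 1 \<noteq> 0" by simp
  ultimately show ?thesis by (simp add: balance_def z_coord_def of_gaps_def)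
qed

lemma cut_form_of_gaps:
  assumes "\<psi> 0 = 0" "\<psi> (m + 1) = 0" and "\<And>j. j \<in> {1..m} \<Longrightarrow> second_diff \<psi> j = a j + b j"
    and "j \<le> m + 1"
  shows "cut_form m (of_gaps m a b) j = \<psi> j"
proof (rule second_diff_unique[of "{0, m + 1}"])
  show "cut_form m (of_gaps m a b) i = \<psi> i" if "i \<in> {0, m + 1}" for i
    using that assms(1,2) cut_form_top[of m] by (auto simp: cut_form_0 balance_of_gaps)
  show "second_diff (cut_form m (of_gaps m a b)) i = second_diff \<psi> i" if "0 < i" "i < m + 1" for i
    using that assms(3)[of i] by (simp add: second_diff_cut_form curvature_of_gaps)
qed (use assms(4) in auto)

lemma slack_nonneg:
  assumes "p \<in> Pd (m + 2)" "j \<le> m + 1"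
  shows "0 \<le> slack m p j"
  using assms slack_0[of m p] slack_top[of m p] unfolding mem_Pd_iff
  by (cases "j = 0 \<or> j = m + 1") auto

lemma gaps_nonneg:
  assumes "p \<in> Pd (m + 2)" "j \<in> {1..m}"
  shows "0 \<le> x_gap m p (m + 1 - j)" "0 \<le> y_gap m p j"
proof -
  have "m + 1 - j \<in> {1..m}" using assms(2) by auto
  with assms show "0 \<le> x_gap m p (m + 1 - j)" "0 \<le> y_gap m p j" by (auto simp: mem_Pd_iff)
qed

lemma curvature_nonneg: "p \<in> Pd (m + 2) \<Longrightarrow> j \<in> {1..m} \<Longrightarrow> 0 \<le> curvature m p j"
  using gaps_nonneg[of p m j] by (simp add: curvature_def)

lemma curvature_pos_if_slack_eq_0:
  assumes "p \<in> Pd (m + 2)" "j \<in> {1..m}" "slack m p j = 0"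
  shows "0 < curvature m p j"
proof -
  have "0 \<le> slack m p (j - 1)" "0 \<le> slack m p (j + 1)"
    using assms(2) by (auto intro!: slack_nonneg[OF assms(1)])
  then show ?thesis
    using second_diff_slack[OF assms(2), of p] assms(3) by (simp add: second_diff_def)
qed

section \<open>Points where the tight constraints have full rank\<close>

definition tight_kernel_trivial :: "nat \<Rightarrow> (nat \<Rightarrow> real) \<Rightarrow> bool" where
  "tight_kernel_trivial d p \<longleftrightarrow> (\<forall>q. (\<forall>c\<in>tight d p. lform d (fst c) q = 0) \<longrightarrow> (\<forall>i<pdim d. q i = 0))"

lemma vertex_imp_tight_kernel_trivial:
  assumes "p \<in> vertices d"
  shows "tight_kernel_trivial d p"
proof -
  obtain V where V: "V \<subseteq> fst ` tight d p" "card V = pdim d" "lin_indep (pdim d) V"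
    using assms unfolding vertices_def by blast
  then have kernel: "\<forall>q. (\<forall>v\<in>V. (\<Sum>i<pdim d. v i * q i) = 0) \<longrightarrow> (\<forall>i<pdim d. q i = 0)"
    using lin_indep_iff_kernel_trivial[of V "pdim d"] by (auto simp: lin_indep_def)
  show ?thesis unfolding tight_kernel_trivial_def
  proof (rule allI, rule impI)
    fix q assume "\<forall>c\<in>tight d p. lform d (fst c) q = 0"
    then have "\<forall>v\<in>V. (\<Sum>i<pdim d. v i * q i) = 0" using V(1) by (auto simp: lform_def)
    then show "\<forall>i<pdim d. q i = 0" using kernel by blast
  qed
qed

(* A direction in which p can be moved while all its tight constraints stay tight, described by
   the change psi of the slacks and the changes a j, b j of the gaps at m + 1 - j and at j. *)
definition tight_direction ::
  "nat \<Rightarrow> (nat \<Rightarrow> real) \<Rightarrow> (nat \<Rightarrow> real) \<Rightarrow> (nat \<Rightarrow> real) \<Rightarrow> (nat \<Rightarrow> real) \<Rightarrow> bool" where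
  "tight_direction m p \<psi> a b \<longleftrightarrow> \<psi> 0 = 0 \<and> \<psi> (m + 1) = 0 \<and>
     (\<forall>j\<in>{1..m}. second_diff \<psi> j = a j + b j \<and> (x_gap m p (m + 1 - j) = 0 \<longrightarrow> a j = 0)
        \<and> (y_gap m p j = 0 \<longrightarrow> b j = 0) \<and> (slack m p j = 0 \<longrightarrow> \<psi> j = 0))"

lemma of_gaps_in_tight_kernel:
  assumes p: "p \<in> Pd (m + 2)" and dir: "tight_direction m p \<psi> a b" and c: "c \<in> tight (m + 2) p"
  shows "lform (m + 2) (fst c) (of_gaps m a b) = 0"
proof -
  let ?q = "of_gaps m a b"
  have xg: "x_gap m ?q k = 0" if "k \<in> {1..m}" "x_gap m p k = 0" for k
  proof -
    have "m + 1 - k \<in> {1..m}" "m + 1 - (m + 1 - k) = k" using that(1) by auto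
    then show ?thesis using dir that by (auto simp: tight_direction_def x_gap_of_gaps)
  qed
  have yg: "y_gap m ?q k = 0" if "k \<in> {1..m}" "y_gap m p k = 0" for k
    using dir that by (auto simp: tight_direction_def y_gap_of_gaps)
  have xc: "x_coord m ?q j = 0" if "j \<in> {1..m}" "x_coord m p j = 0" for j
  proof -
    have "\<forall>k\<in>{j..m}. x_gap m p k = 0"
      using that p x_coord_eq_sum_x_gap[of j m p] sum_nonneg_eq_0_iff[of "{j..m}" "x_gap m p"]
      by (auto simp: mem_Pd_iff)
    then show ?thesis using that xg x_coord_eq_sum_x_gap[of j m ?q] by simp
  qed
  have yc: "y_coord m ?q j = 0" if "j \<in> {1..m}" "y_coord m p j = 0" for j
  proof -
    have "\<forall>k\<in>{j..m}. y_gap m p k = 0"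
      using that p y_coord_eq_sum_y_gap[of j m p] sum_nonneg_eq_0_iff[of "{j..m}" "y_gap m p"]
      by (auto simp: mem_Pd_iff)
    then show ?thesis using that yg y_coord_eq_sum_y_gap[of j m ?q] by simp
  qed
  have cut: "cut_form m ?q j = 0" if "j \<in> {1..m}" "slack m p j = 0" for j
    using dir that cut_form_of_gaps[of \<psi> m a b j] by (auto simp: tight_direction_def)
  show ?thesis
  proof (cases "c = eqc (m + 2)")
    case True then show ?thesis by (simp add: lform_eqc balance_of_gaps)
  next
    case False
    with c have "c \<in> ineqs (m + 2)" "lval (m + 2) c p = 0" by (auto simp: tight_def)
    then show ?thesis
      by (cases rule: ineqs_cases) (auto simp: lval_eq lform_x_gap_vec lform_y_gap_vec
          lform_ev_xi lform_ev_yi lform_cut_vec slack_def xg yg xc yc cut)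
  qed
qed

lemma tight_direction_trivial:
  assumes "p \<in> Pd (m + 2)" "tight_kernel_trivial (m + 2) p" "tight_direction m p \<psi> a b" "j \<in> {1..m}"
  shows "a j = 0 \<and> b j = 0"
proof -
  let ?q = "of_gaps m a b"
  have "?q i = 0" if "i < 2 * m + 1" for i
    using assms(2) of_gaps_in_tight_kernel[OF assms(1,3)] that
    unfolding tight_kernel_trivial_def by simp
  then have "x_coord m ?q k = 0" "y_coord m ?q k = 0" for k by (auto simp: x_coord_def y_coord_def)
  moreover have "m + 1 - j \<in> {1..m}" "m + 1 - (m + 1 - j) = j" using assms(4) by auto
  ultimately show ?thesis
    using x_gap_of_gaps[of "m + 1 - j" m a b] y_gap_of_gaps[OF assms(4), of a b]
    by (simp add: x_gap_def y_gap_def)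
qed

lemma nearest_zeros:
  fixes g :: "nat \<Rightarrow> real"
  assumes "g 0 = 0" "g N = 0" "k \<le> N" "g k \<noteq> 0"
  obtains l r where "l < k" "k < r" "r \<le> N" "g l = 0" "g r = 0" "\<And>j. l < j \<Longrightarrow> j < r \<Longrightarrow> g j \<noteq> 0"
proof -
  define L where "L = {t. t < k \<and> g t = 0}"
  define R where "R = {t. k < t \<and> t \<le> N \<and> g t = 0}"
  define l r where "l = Max L" and "r = Min R"
  have "finite L" unfolding L_def by (rule finite_subset[of _ "{..<k}"]) auto
  have "finite R" unfolding R_def by (rule finite_subset[of _ "{..N}"]) auto
  have "k \<noteq> 0" "k \<noteq> N" using assms by metis+
  then have "0 < k" "k < N" using assms(3) by auto
  then have "0 \<in> L" "N \<in> R" using assms(1,2) by (auto simp: L_def R_def)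
  then have "l \<in> L" "r \<in> R"
    using \<open>finite L\<close> \<open>finite R\<close> unfolding l_def r_def by (auto intro: Max_in Min_in)
  then have lr: "l < k" "g l = 0" "k < r" "r \<le> N" "g r = 0" unfolding L_def R_def by auto
  have "g j \<noteq> 0" if "l < j" "j < r" for j
  proof
    assume "g j = 0"
    moreover have "j \<noteq> k" using assms(4) \<open>g j = 0\<close> by auto
    ultimately have "j \<in> L \<or> j \<in> R" using that lr by (auto simp: L_def R_def)
    then show False
      using that Max_ge[OF \<open>finite L\<close>, of j] Min_le[OF \<open>finite R\<close>, of j]
      unfolding l_def r_def by linarith
  qed
  with lr show ?thesis using that by blast
qed

context
  fixes m :: nat and p :: "nat \<Rightarrow> real"
  assumes p: "p \<in> Pd (m + 2)" and rigid: "tight_kernel_trivial (m + 2) p"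
begin

lemma gaps_not_both_pos:
  assumes "j \<in> {1..m}"
  shows "x_gap m p (m + 1 - j) = 0 \<or> y_gap m p j = 0"
proof (rule ccontr)
  assume "\<not> ?thesis"
  then have "tight_direction m p (\<lambda>_. 0) (\<lambda>i. if i = j then 1 else 0) (\<lambda>i. if i = j then -1 else 0)"
    by (auto simp: tight_direction_def second_diff_def)
  from tight_direction_trivial[OF p rigid this assms] show False by simp
qed

lemma slack_eq_0_if_curvature_pos:
  assumes k: "k \<in> {1..m}" and curv: "0 < curvature m p k"
  shows "slack m p k = 0"
\<comment> \<open>Otherwise p could be moved along the hat function with its kink at k between the nearest
  zeros of the slack, each of the three kinks being absorbed by a gap that is not tight.\<close>
proof (rule ccontr)
  assume "slack m p k \<noteq> 0"
  moreover have "slack m p 0 = 0" "slack m p (m + 1) = 0"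
    using p slack_0[of m p] slack_top[of m p] by (auto simp: mem_Pd_iff)
  ultimately obtain l r where lr: "l < k" "k < r" "r \<le> m + 1" "slack m p l = 0" "slack m p r = 0"
    and between: "\<And>j. l < j \<Longrightarrow> j < r \<Longrightarrow> slack m p j \<noteq> 0"
    using nearest_zeros[of "slack m p" "m + 1" k] k by auto
  define e where "e = second_diff (hat l k r)"
  define a where "a j = (if 0 < x_gap m p (m + 1 - j) then e j else 0)" for j
  define b where "b j = e j - a j" for j
  have "b j = 0" if "j \<in> {1..m}" "y_gap m p j = 0" for j
  proof (cases "0 < x_gap m p (m + 1 - j)")
    case False
    then have "curvature m p j = 0"
      using that curvature_nonneg[OF p that(1)] by (simp add: curvature_def)
    then have "j \<noteq> l" "j \<noteq> k" "j \<noteq> r"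
      using that(1) curv curvature_pos_if_slack_eq_0[OF p that(1)] lr by auto
    then show ?thesis using that(1) by (simp add: b_def a_def e_def second_diff_hat)
  qed (simp add: a_def b_def)
  moreover have "hat l k r j = 0" if "slack m p j = 0" for j
    using that between lr(1,2) by (intro hat_eq_0_outside) (auto simp: not_less[symmetric])
  ultimately have "tight_direction m p (hat l k r) a b"
    using lr hat_eq_0_outside[of l k r 0] hat_eq_0_outside[of l k r "m + 1"]
    by (auto simp: tight_direction_def a_def b_def e_def)
  from tight_direction_trivial[OF p rigid this k] have "a k + b k = 0" by simp
  moreover have "a k + b k = - (real r - real l)"
    using k lr by (simp add: b_def e_def second_diff_hat)
  ultimately show False using lr by simp
qed

lemma slack_eq_arches:
  assumes "j \<le> m + 1"
  shows "slack m p j = arches m {k \<in> {1..m}. 0 < curvature m p k} j"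
proof -
  let ?S = "{k \<in> {1..m}. 0 < curvature m p k}"
  have S: "?S \<subseteq> {1..m}" by auto
  show ?thesis
  proof (rule second_diff_unique[of "insert 0 (insert (m + 1) ?S)" "m + 1"])
    show "slack m p i = arches m ?S i" if "i \<in> insert 0 (insert (m + 1) ?S)" for i
      using that arches_eq_0[OF S that] slack_0[of m p] slack_top[of m p] p
        slack_eq_0_if_curvature_pos by (auto simp: mem_Pd_iff)
    show "second_diff (slack m p) i = second_diff (arches m ?S) i"
      if "0 < i" "i < m + 1" "i \<notin> insert 0 (insert (m + 1) ?S)" for i
    proof -
      have "i \<in> {1..m}" using that by auto
      with that curvature_nonneg[OF p this] have "curvature m p i = 0" by auto
      with \<open>i \<in> {1..m}\<close> that show ?thesis
        using second_diff_arches[OF S, of i] by (simp add: second_diff_slack)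
    qed
  qed (use assms in auto)
qed

lemma curvature_eq_arch_kink:
  assumes "k \<in> {1..m}" "0 < curvature m p k"
  shows "curvature m p k = arch_kink m {k \<in> {1..m}. 0 < curvature m p k} k"
proof -
  let ?S = "{k \<in> {1..m}. 0 < curvature m p k}"
  have "k - 1 \<le> m + 1" "k \<le> m + 1" "k + 1 \<le> m + 1" using assms(1) by auto
  then have "second_diff (slack m p) k = second_diff (arches m ?S) k"
    by (simp add: second_diff_def slack_eq_arches)
  moreover have "?S \<subseteq> {1..m}" by auto
  ultimately show ?thesis using assms second_diff_arches[of ?S m k] by (simp add: second_diff_slack)
qed

end

section \<open>The vertices\<close>

(* Code 0 at j: the slack is positive at j; codes 1 and 2: it vanishes at j and the kink of the
   arches at j is carried by the x-gap at m + 1 - j, resp. by the y-gap at j. *)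
definition codes :: "nat \<Rightarrow> (nat \<Rightarrow> nat) set" where
  "codes m = {1..m} \<rightarrow>\<^sub>E {0, 1, 2}"

definition code_support :: "nat \<Rightarrow> (nat \<Rightarrow> nat) \<Rightarrow> nat set" where
  "code_support m f = {k \<in> {1..m}. f k \<noteq> 0}"

definition vertex_of :: "nat \<Rightarrow> (nat \<Rightarrow> nat) \<Rightarrow> nat \<Rightarrow> real" where
  "vertex_of m f = of_gaps m (\<lambda>k. if f k = 1 then arch_kink m (code_support m f) k else 0)
     (\<lambda>k. if f k = 2 then arch_kink m (code_support m f) k else 0)"

definition code_of :: "nat \<Rightarrow> (nat \<Rightarrow> real) \<Rightarrow> nat \<Rightarrow> nat" where
  "code_of m p =
     (\<lambda>k\<in>{1..m}. if 0 < x_gap m p (m + 1 - k) then 1 else if 0 < y_gap m p k then 2 else 0)"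

lemma code_values: "f \<in> codes m \<Longrightarrow> k \<in> {1..m} \<Longrightarrow> f k = 0 \<or> f k = 1 \<or> f k = 2"
  by (auto simp: codes_def PiE_iff)

lemma code_support_subset: "code_support m f \<subseteq> {1..m}"
  by (auto simp: code_support_def)

lemma gaps_vertex_of:
  assumes "j \<in> {1..m}"
  shows "x_gap m (vertex_of m f) (m + 1 - j) =
      (if f j = 1 then arch_kink m (code_support m f) j else 0)"
    and "y_gap m (vertex_of m f) j = (if f j = 2 then arch_kink m (code_support m f) j else 0)"
proof -
  have "m + 1 - j \<in> {1..m}" "m + 1 - (m + 1 - j) = j" using assms by auto
  then show "x_gap m (vertex_of m f) (m + 1 - j) =
      (if f j = 1 then arch_kink m (code_support m f) j else 0)"
    by (simp add: vertex_of_def x_gap_of_gaps)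
  show "y_gap m (vertex_of m f) j = (if f j = 2 then arch_kink m (code_support m f) j else 0)"
    using assms by (simp add: vertex_of_def y_gap_of_gaps)
qed

lemma code_support_code_of:
  assumes "p \<in> Pd (m + 2)"
  shows "code_support m (code_of m p) = {k \<in> {1..m}. 0 < curvature m p k}"
proof -
  have "code_of m p k \<noteq> 0 \<longleftrightarrow> 0 < curvature m p k" if "k \<in> {1..m}" for k
    using gaps_nonneg[OF assms that] that by (auto simp: code_of_def curvature_def)
  then show ?thesis by (auto simp: code_support_def)
qed

lemma gaps_eq_gaps_vertex_of_code_of:
  assumes p: "p \<in> Pd (m + 2)" and rigid: "tight_kernel_trivial (m + 2) p" and j: "j \<in> {1..m}"
  shows "x_gap m p (m + 1 - j) = x_gap m (vertex_of m (code_of m p)) (m + 1 - j)"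
    and "y_gap m p j = y_gap m (vertex_of m (code_of m p)) j"
proof -
  let ?f = "code_of m p"
  have kink: "x_gap m p (m + 1 - j) + y_gap m p j = arch_kink m (code_support m ?f) j"
    if "0 < x_gap m p (m + 1 - j) + y_gap m p j"
    using curvature_eq_arch_kink[OF p rigid j] that code_support_code_of[OF p]
    by (simp add: curvature_def)
  have code: "?f j = (if 0 < x_gap m p (m + 1 - j) then 1 else if 0 < y_gap m p j then 2 else 0)"
    using j by (simp add: code_of_def)
  consider "0 < x_gap m p (m + 1 - j)" "y_gap m p j = 0"
    | "x_gap m p (m + 1 - j) = 0" "0 < y_gap m p j"
    | "x_gap m p (m + 1 - j) = 0" "y_gap m p j = 0"
    using gaps_nonneg[OF p j] gaps_not_both_pos[OF p rigid j] by (smt (verit))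
  note gap_cases = this
  note facts = kink code gaps_vertex_of[OF j, of ?f]
  show "x_gap m p (m + 1 - j) = x_gap m (vertex_of m ?f) (m + 1 - j)"
    using gap_cases by cases (use facts in simp_all)
  show "y_gap m p j = y_gap m (vertex_of m ?f) j"
    using gap_cases by cases (use facts in simp_all)
qed

lemma eq_vertex_of_code_of:
  assumes p: "p \<in> Pd (m + 2)" and rigid: "tight_kernel_trivial (m + 2) p"
  shows "code_of m p \<in> codes m" "p = vertex_of m (code_of m p)"
proof -
  let ?f = "code_of m p"
  show "?f \<in> codes m" by (auto simp: codes_def code_of_def)
  note gaps = gaps_eq_gaps_vertex_of_code_of[OF p rigid]
  have x_gaps: "x_gap m p k = x_gap m (vertex_of m ?f) k" if "k \<in> {1..m}" for k
  proof -
    have "m + 1 - k \<in> {1..m}" "m + 1 - (m + 1 - k) = k" using that by auto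
    then show ?thesis using gaps(1)[of "m + 1 - k"] by simp
  qed
  have balance: "balance m p = balance m (vertex_of m ?f)"
    using p by (simp add: mem_Pd_iff vertex_of_def balance_of_gaps)
  have outside: "p i = 0" "vertex_of m ?f i = 0" if "2 * m + 1 \<le> i" for i
    using p that by (auto simp: mem_Pd_iff vertex_of_def of_gaps_eq_0)
  show "p = vertex_of m ?f"
  proof
    fix i
    show "p i = vertex_of m ?f i"
      using eq_if_gaps_eq[of m p "vertex_of m ?f", OF x_gaps gaps(2) balance] outside[of i]
      by (cases "i < 2 * m + 1") auto
  qed
qed

context
  fixes m :: nat and f :: "nat \<Rightarrow> nat"
  assumes f: "f \<in> codes m"
begin

lemma curvature_vertex_of:
  assumes "j \<in> {1..m}"
  shows "curvature m (vertex_of m f) j =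
      (if j \<in> code_support m f then arch_kink m (code_support m f) j else 0)"
  using code_values[OF f assms] assms
  by (auto simp: vertex_of_def curvature_of_gaps code_support_def)

lemma slack_vertex_of:
  assumes "j \<le> m + 1"
  shows "slack m (vertex_of m f) j = arches m (code_support m f) j"
proof (rule second_diff_unique[of "{0, m + 1}" "m + 1"])
  show "slack m (vertex_of m f) i = arches m (code_support m f) i" if "i \<in> {0, m + 1}" for i
    using that slack_0[of m] slack_top[of m "vertex_of m f"]
      arches_eq_0[OF code_support_subset, of i]
    by (auto simp: vertex_of_def balance_of_gaps)
  show "second_diff (slack m (vertex_of m f)) i = second_diff (arches m (code_support m f)) i"
    if "0 < i" "i < m + 1" for i
    using that second_diff_arches[OF code_support_subset, of i]
    by (simp add: second_diff_slack curvature_vertex_of)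
qed (use assms in auto)

lemma vertex_of_mem_Pd: "vertex_of m f \<in> Pd (m + 2)"
proof -
  have gaps: "0 \<le> x_gap m (vertex_of m f) (m + 1 - j) \<and> 0 \<le> y_gap m (vertex_of m f) j"
    if "j \<in> {1..m}" for j
    using gaps_vertex_of[OF that, of f] arch_kink_pos[OF code_support_subset, of j m f] that
    by (auto simp: code_support_def)
  have "0 \<le> x_gap m (vertex_of m f) k" if "k \<in> {1..m}" for k
  proof -
    have "m + 1 - k \<in> {1..m}" "m + 1 - (m + 1 - k) = k" using that by auto
    then show ?thesis using gaps[of "m + 1 - k"] by simp
  qed
  then show ?thesis
    using gaps slack_vertex_of arches_nonneg[OF code_support_subset]
    by (simp add: mem_Pd_iff vertex_of_def of_gaps_eq_0 balance_of_gaps)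
qed

lemma vertex_of_int: "vertex_of m f i \<in> \<int>"
proof -
  have kink: "arch_kink m (code_support m f) k \<in> \<int>" for k
    by (simp add: arch_kink_def)
  have x: "x_coord m (vertex_of m f) j \<in> \<int>" for j
  proof (cases "1 \<le> j")
    case True
    then show ?thesis using kink by (auto simp: vertex_of_def x_coord_of_gaps intro!: Ints_sum)
  qed (simp add: x_coord_def)
  have y: "y_coord m (vertex_of m f) j \<in> \<int>" for j
  proof (cases "1 \<le> j")
    case True
    then show ?thesis using kink by (auto simp: vertex_of_def y_coord_of_gaps intro!: Ints_sum)
  qed (simp add: y_coord_def)
  have "z_coord m (vertex_of m f) =
      arches m (code_support m f) 1 + y_coord m (vertex_of m f) 1 - real m"
    using slack_vertex_of[of 1] slack_1[of m "vertex_of m f"] by simp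
  then have z: "z_coord m (vertex_of m f) \<in> \<int>" using y[of 1] by (simp add: arches_def)
  show ?thesis
  proof (cases "i < 2 * m + 1")
    case True
    with x y z show ?thesis by (subst point_eq_coords[of i m "vertex_of m f"]) auto
  qed (simp add: vertex_of_def of_gaps_eq_0)
qed

end

lemma inj_on_vertex_of: "inj_on (vertex_of m) (codes m)"
proof (rule inj_onI)
  fix f g assume f: "f \<in> codes m" and g: "g \<in> codes m" and eq: "vertex_of m f = vertex_of m g"
  have "f j = g j" if j: "j \<in> {1..m}" for j
  proof -
    have pos: "0 < arch_kink m (code_support m h) j" if "h j \<noteq> 0" for h
      using arch_kink_pos[OF code_support_subset, of j m h] that j by (simp add: code_support_def)
    have "(if f j = 1 then arch_kink m (code_support m f) j else 0)
        = (if g j = 1 then arch_kink m (code_support m g) j else 0)"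
      "(if f j = 2 then arch_kink m (code_support m f) j else 0)
        = (if g j = 2 then arch_kink m (code_support m g) j else 0)"
      using gaps_vertex_of[OF j, of f] gaps_vertex_of[OF j, of g] eq by simp_all
    then show ?thesis
      using code_values[OF f j] code_values[OF g j] pos[of f] pos[of g] by (auto split: if_splits)
  qed
  then show "f = g" using f g unfolding codes_def by (auto intro: PiE_ext)
qed

definition tight_basis :: "nat \<Rightarrow> (nat \<Rightarrow> nat) \<Rightarrow> (nat \<Rightarrow> real) set" where
  "tight_basis m f = (\<lambda>j. x_gap_vec m (m + 1 - j)) ` {j \<in> {1..m}. f j \<noteq> 1}
     \<union> y_gap_vec m ` {j \<in> {1..m}. f j \<noteq> 2} \<union> cut_vec m ` code_support m f \<union> {fst (eqc (m + 2))}"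

lemma x_gap_vec_apply:
  "j \<in> {1..m} \<Longrightarrow> x_gap_vec m j i = (if i = j - 1 then 1 else if i = j \<and> j < m then -1 else 0)"
  by (auto simp: x_gap_vec_def ev_def xi_def)

lemma y_gap_vec_apply:
  "j \<in> {1..m} \<Longrightarrow>
    y_gap_vec m j i = (if i = m - 1 + j then 1 else if i = m + j \<and> j < m then -1 else 0)"
  by (auto simp: y_gap_vec_def ev_def yi_def)

lemma ev_apply_z: "ev (zi (m + 2)) (2 * m) = 1"
  and ev_x_apply_z: "i \<in> {1..m} \<Longrightarrow> ev (xi i) (2 * m) = 0"
  and ev_y_apply_z: "i \<in> {1..m} \<Longrightarrow> ev (yi (m + 2) i) (2 * m) = 0"
  by (auto simp: ev_def xi_def yi_def zi_def)

lemma cut_vec_apply_z: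
  assumes "j \<in> {1..m}"
  shows "cut_vec m j (2 * m) = real j"
proof -
  have "(\<Sum>i\<in>{0..<j - 1}. ev (xi (m - i)) (2 * m)) = 0" "(\<Sum>i\<in>{1..j}. ev (yi (m + 2) i) (2 * m)) = 0"
    using assms by (auto intro!: sum.neutral ev_x_apply_z ev_y_apply_z)
  then show ?thesis by (simp add: cut_vec_def sum_fun_apply ev_apply_z)
qed

lemma eqc_apply_z: "fst (eqc (m + 2)) (2 * m) = - (real m + 1)"
proof -
  have "(\<Sum>i\<in>{1..m}. ev (xi i) (2 * m)) = 0" "(\<Sum>i\<in>{1..m}. ev (yi (m + 2) i) (2 * m)) = 0"
    by (auto intro!: sum.neutral ev_x_apply_z ev_y_apply_z)
  then show ?thesis by (simp add: eqc_def sum_fun_apply ev_apply_z)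
qed

lemma card_code_levels:
  assumes "f \<in> codes m"
  shows "card {j \<in> {1..m}. f j \<noteq> 1} + card {j \<in> {1..m}. f j \<noteq> 2} + card (code_support m f) = 2 * m"
proof -
  have level: "card {j \<in> {1..m}. f j \<noteq> c} = (\<Sum>j\<in>{1..m}. if f j \<noteq> c then 1 else 0)" for c
    by (simp only: card_eq_sum sum.inter_filter[OF finite_atLeastAtMost])
  have distrib: "sum g1 A + sum g2 A + sum g3 A = (\<Sum>j\<in>A. g1 j + g2 j + g3 j)"
    for g1 g2 g3 :: "nat \<Rightarrow> nat" and A by (simp only: sum.distrib[symmetric])
  have "(\<Sum>j\<in>{1..m}. (if f j \<noteq> 1 then 1 else 0) + (if f j \<noteq> 2 then 1 else 0)
        + (if f j \<noteq> 0 then 1 else 0))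
      = (\<Sum>j\<in>{1..m}. 2 :: nat)"
    using code_values[OF assms] by (intro sum.cong) auto
  then show ?thesis unfolding code_support_def level distrib by simp
qed

lemma gap_vecs_apply_z:
  assumes "j \<in> {1..m}"
  shows "x_gap_vec m (m + 1 - j) (2 * m) = 0 \<and> y_gap_vec m j (2 * m) = 0"
proof -
  have "m + 1 - j \<in> {1..m}" "2 * m \<noteq> m - j" "2 * m \<noteq> m - 1 + j" "\<not> (2 * m = m + j \<and> j < m)"
    using assms by auto
  then show ?thesis
    using x_gap_vec_apply[of "m + 1 - j" m "2 * m"] y_gap_vec_apply[OF assms] by simp
qed
lemma inj_on_x_gap_vec_reflected: "inj_on (\<lambda>j. x_gap_vec m (m + 1 - j)) {1..m}"
proof (rule inj_onI)
  fix j j' assume j: "j \<in> {1..m}" "j' \<in> {1..m}"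
    and eq: "x_gap_vec m (m + 1 - j) = x_gap_vec m (m + 1 - j')"
  have r: "m + 1 - j \<in> {1..m}" "m + 1 - j' \<in> {1..m}" using j by auto
  have "x_gap_vec m (m + 1 - j') (m - j) = 1"
    using eq j x_gap_vec_apply[OF r(1), of "m - j"] by simp
  then show "j = j'" using j x_gap_vec_apply[OF r(2), of "m - j"] by (simp split: if_splits)
qed

lemma inj_on_y_gap_vec: "inj_on (y_gap_vec m) {1..m}"
proof (rule inj_onI)
  fix j j' assume j: "j \<in> {1..m}" "j' \<in> {1..m}" and "y_gap_vec m j = y_gap_vec m j'"
  then have "y_gap_vec m j' (m - 1 + j) = 1" using y_gap_vec_apply[OF j(1), of "m - 1 + j"] by simp
  then show "j = j'" using j y_gap_vec_apply[OF j(2), of "m - 1 + j"] by (simp split: if_splits)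
qed

lemma inj_on_cut_vec: "inj_on (cut_vec m) {1..m}"
proof (rule inj_onI)
  fix j j' assume j: "j \<in> {1..m}" "j' \<in> {1..m}" and "cut_vec m j = cut_vec m j'"
  then have "cut_vec m j (2 * m) = cut_vec m j' (2 * m)" by simp
  then show "j = j'" using j by (simp add: cut_vec_apply_z)
qed

lemma x_gap_vec_neq_y_gap_vec:
  assumes "j \<in> {1..m}" "j' \<in> {1..m}"
  shows "x_gap_vec m j \<noteq> y_gap_vec m j'"
proof -
  have "x_gap_vec m j (m - 1 + j') = 0"
    using assms x_gap_vec_apply[OF assms(1), of "m - 1 + j'"] by auto
  moreover have "y_gap_vec m j' (m - 1 + j') = 1" using y_gap_vec_apply[OF assms(2)] by simp
  ultimately show ?thesis by auto
qed

lemma card_gap_vecs: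
  "card ((\<lambda>j. x_gap_vec m (m + 1 - j)) ` {j \<in> {1..m}. f j \<noteq> 1}
      \<union> y_gap_vec m ` {j \<in> {1..m}. f j \<noteq> 2})
     = card {j \<in> {1..m}. f j \<noteq> 1} + card {j \<in> {1..m}. f j \<noteq> 2}"
proof -
  let ?X = "(\<lambda>j. x_gap_vec m (m + 1 - j)) ` {j \<in> {1..m}. f j \<noteq> 1}"
  let ?Y = "y_gap_vec m ` {j \<in> {1..m}. f j \<noteq> 2}"
  have "card ?X = card {j \<in> {1..m}. f j \<noteq> 1}" "card ?Y = card {j \<in> {1..m}. f j \<noteq> 2}"
    by (rule card_image, rule inj_on_subset[OF inj_on_x_gap_vec_reflected], blast,
        rule card_image, rule inj_on_subset[OF inj_on_y_gap_vec], blast)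
  moreover have "?X \<inter> ?Y = {}"
  proof -
    have "m + 1 - j \<in> {1..m}" if "j \<in> {1..m}" for j using that by auto
    then have False if "v \<in> ?X" "v \<in> ?Y" for v using that x_gap_vec_neq_y_gap_vec by blast
    then show ?thesis by blast
  qed
  ultimately show ?thesis by (simp add: card_Un_disjoint)
qed

lemma card_tight_basis:
  assumes "f \<in> codes m"
  shows "card (tight_basis m f) = 2 * m + 1"
proof -
  let ?G = "(\<lambda>j. x_gap_vec m (m + 1 - j)) ` {j \<in> {1..m}. f j \<noteq> 1}
    \<union> y_gap_vec m ` {j \<in> {1..m}. f j \<noteq> 2}"
  let ?C = "cut_vec m ` code_support m f"
  have "card ?C = card (code_support m f)"
    by (rule card_image, rule inj_on_subset[OF inj_on_cut_vec code_support_subset])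
  have zero: "v (2 * m) = 0" if "v \<in> ?G" for v
    using that gap_vecs_apply_z by blast
  have pos: "v (2 * m) \<ge> 1" if v: "v \<in> ?C" for v
  proof -
    obtain j where "j \<in> code_support m f" "v = cut_vec m j" using v by blast
    then show ?thesis using code_support_subset[of m f] cut_vec_apply_z[of j m] by auto
  qed
  have "?G \<inter> ?C = {}"
  proof -
    have False if "v \<in> ?G" "v \<in> ?C" for v using zero[OF that(1)] pos[OF that(2)] by simp
    then show ?thesis by blast
  qed
  moreover have "finite ?G" "finite ?C" using finite_subset[OF code_support_subset] by auto
  ultimately have "card (?G \<union> ?C) = 2 * m"
    using card_gap_vecs[of m f] \<open>card ?C = _\<close> card_code_levels[OF assms]
    by (simp add: card_Un_disjoint)
  moreover have "fst (eqc (m + 2)) \<notin> ?G \<union> ?C"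
  proof
    assume "fst (eqc (m + 2)) \<in> ?G \<union> ?C"
    then consider "fst (eqc (m + 2)) \<in> ?G" | "fst (eqc (m + 2)) \<in> ?C" by blast
    then show False
    proof cases
      case 1 then show False using zero[OF 1] eqc_apply_z[of m] by simp
    next
      case 2 then show False using pos[OF 2] eqc_apply_z[of m] by simp
    qed
  qed
  moreover have "tight_basis m f = insert (fst (eqc (m + 2))) (?G \<union> ?C)"
    unfolding tight_basis_def by blast
  ultimately show ?thesis using \<open>finite ?G\<close> \<open>finite ?C\<close> by simp
qed

context
  fixes m :: nat and f :: "nat \<Rightarrow> nat"
  assumes f: "f \<in> codes m"
begin

lemma tight_basis_subset_tight: "tight_basis m f \<subseteq> fst ` tight (m + 2) (vertex_of m f)"
proof -
  have "(x_gap_vec m (m + 1 - j), 0) \<in> tight (m + 2) (vertex_of m f)"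
    if "j \<in> {1..m}" "f j \<noteq> 1" for j
  proof -
    have "m + 1 - j \<in> {1..m}" using that by auto
    then show ?thesis
      using that gaps_vertex_of(1)[OF that(1), of f] x_gap_vec_in_ineqs[of "m + 1 - j" m]
      by (simp add: tight_def lval_eq lform_x_gap_vec)
  qed
  moreover have "(y_gap_vec m j, 0) \<in> tight (m + 2) (vertex_of m f)" if "j \<in> {1..m}" "f j \<noteq> 2" for j
    using that gaps_vertex_of(2)[OF that(1), of f] y_gap_vec_in_ineqs[OF that(1)]
    by (simp add: tight_def lval_eq lform_y_gap_vec)
  moreover have "(cut_vec m j, real j * (real m + 1 - real j)) \<in> tight (m + 2) (vertex_of m f)"
    if "j \<in> code_support m f" for j
  proof -
    have "j \<in> {1..m}" using that code_support_subset by blast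
    then show ?thesis
      using that cut_vec_in_ineqs[of j m] lval_cut_vec[of j m] slack_vertex_of[OF f, of j]
        arches_eq_0[OF code_support_subset, of j m f]
      by (simp add: tight_def)
  qed
  moreover have "eqc (m + 2) \<in> tight (m + 2) (vertex_of m f)" by (simp add: tight_def)
  ultimately show ?thesis
    unfolding tight_basis_def by (blast intro: image_eqI[where f = fst, OF fst_conv[symmetric]])
qed

lemma tight_basis_kernel:
  assumes q: "\<And>v. v \<in> tight_basis m f \<Longrightarrow> lform (m + 2) v q = 0" and "i < 2 * m + 1"
  shows "q i = 0"
proof -
  let ?S = "code_support m f"
  have x_gap: "x_gap m q (m + 1 - j) = 0" if "j \<in> {1..m}" "f j \<noteq> 1" for j
  proof -
    have "m + 1 - j \<in> {1..m}" using that by auto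
    then show ?thesis using that q[of "x_gap_vec m (m + 1 - j)"] lform_x_gap_vec[of "m + 1 - j" m q]
      by (simp add: tight_basis_def)
  qed
  have y_gap: "y_gap m q j = 0" if "j \<in> {1..m}" "f j \<noteq> 2" for j
    using that q[of "y_gap_vec m j"] lform_y_gap_vec[of j m q] by (simp add: tight_basis_def)
  have cut: "cut_form m q j = 0" if "j \<le> m + 1" for j
  proof (rule second_diff_unique[of "insert 0 (insert (m + 1) ?S)" "m + 1" _ "\<lambda>_. 0"])
    show "cut_form m q i = 0" if "i \<in> insert 0 (insert (m + 1) ?S)" for i
      using that q[of "fst (eqc (m + 2))"] q[of "cut_vec m i"] lform_cut_vec[of i m q]
        lform_eqc[of m q]
        cut_form_0[of m q] cut_form_top[of m q] code_support_subset[of m f]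
      by (auto simp: tight_basis_def)
    show "second_diff (cut_form m q) i = second_diff (\<lambda>_. 0) i"
      if "0 < i" "i < m + 1" "i \<notin> insert 0 (insert (m + 1) ?S)" for i
    proof -
      have "i \<in> {1..m}" "f i = 0" using that by (auto simp: code_support_def)
      then show ?thesis
        using x_gap y_gap second_diff_cut_form[of i m q]
        by (simp add: curvature_def second_diff_def)
    qed
  qed (use that in auto)
  have "x_gap m q (m + 1 - j) = 0 \<and> y_gap m q j = 0" if "j \<in> {1..m}" for j
  proof -
    have "j - 1 \<le> m + 1" "j \<le> m + 1" "j + 1 \<le> m + 1" using that by auto
    then have "curvature m q j = 0"
      using second_diff_cut_form[OF that, of q] by (simp add: second_diff_def cut)
    then show ?thesis
      using x_gap[OF that] y_gap[OF that] by (cases "f j = 1") (auto simp: curvature_def)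
  qed
  moreover have "m + 1 - k \<in> {1..m}" "m + 1 - (m + 1 - k) = k" if "k \<in> {1..m}" for k
    using that by auto
  ultimately have "x_gap m q k = 0" "y_gap m q k = 0" if "k \<in> {1..m}" for k
    using that by (metis, blast)
  moreover have "balance m q = 0"
    using q[of "fst (eqc (m + 2))"] lform_eqc[of m q] by (simp add: tight_basis_def)
  ultimately show ?thesis using zero_if_gaps_zero[OF _ _ _ assms(2)] by blast
qed

lemma vertex_of_mem_vertices: "vertex_of m f \<in> vertices (m + 2)"
proof -
  have "finite (tight_basis m f)"
    using finite_subset[OF code_support_subset] by (simp add: tight_basis_def)
  then have "lin_indep (pdim (m + 2)) (tight_basis m f)"
    using tight_basis_kernel card_tight_basis[OF f]
    by (simp add: lin_indep_iff_kernel_trivial lform_def)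
  then show ?thesis
    unfolding vertices_def
    using vertex_of_mem_Pd[OF f] tight_basis_subset_tight card_tight_basis[OF f] by auto
qed

end

theorem theorem5p20:
  fixes d :: nat
  assumes "d \<ge> 3"
  shows "(\<exists>M. \<forall>p\<in>Pd d. \<forall>i. \<bar>p i\<bar> \<le> M)
       \<and> (\<forall>v\<in>vertices d. \<forall>i. v i \<in> \<int>)
       \<and> finite (vertices d) \<and> card (vertices d) = 3 ^ (d - 2)"
proof -
  define m where "m = d - 2"
  then have d: "d = m + 2" and m: "1 \<le> m" using assms by auto
  have vertices: "vertices (m + 2) = vertex_of m ` codes m"
  proof
    show "vertices (m + 2) \<subseteq> vertex_of m ` codes m"
    proof
      fix p assume "p \<in> vertices (m + 2)"
      then have "p \<in> Pd (m + 2)" "tight_kernel_trivial (m + 2) p"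
        using vertex_imp_tight_kernel_trivial by (auto simp: vertices_def)
      then show "p \<in> vertex_of m ` codes m" using eq_vertex_of_code_of by blast
    qed
    show "vertex_of m ` codes m \<subseteq> vertices (m + 2)" using vertex_of_mem_vertices by blast
  qed
  have "card (codes m) = 3 ^ m" by (simp add: codes_def card_PiE numeral_3_eq_3)
  moreover have "finite (codes m)" by (simp add: codes_def finite_PiE)
  ultimately show ?thesis
    using Pd_bounded[OF _ m] vertex_of_int card_image[OF inj_on_vertex_of]
    unfolding d vertices by auto
qed

end
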